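(* Let $A=(a_{i,j})$ be an $n\times n$ Monge matrix and $B=(b_{i,j})$ an $n\times n$ Anti-Monge matrix, and consider RecovAP with $c_1(\{u_i,v_j\})=a_{i,j}$, $c_2(\{u_i,v_j\})=b_{i,j}$ and intersection bound $k$ (admitting a feasible solution). Then there is a feasible solution $M_1,M_2$ of minimum cost $c_1(M_1)+c_2(M_2)$ such that all $4$-cycles of $M_1,M_2$ are aligned, any two $4$-cycles are nested (one inside the other), and every $2$-cycle is nested inside every $4$-cycle.
   Context: $K_{n,n}$ has vertex classes $U=\{u_1,\dots,u_n\}$, $V=\{v_1,\dots,v_n\}$. RecovAP: find perfect matchings $M_1,M_2$ of $K_{n,n}$ with $|M_1\cap M_2|\ge k$ minimizing $c_1(M_1)+c_2(M_2)$. $A$ is Monge if $a_{i,j}+a_{k,l}\le a_{i,l}+a_{k,j}$ for all $i<k$, $j<l$; $B$ is Anti-Monge if the reverse inequality holds. For perfect matchings $M_1,M_2$, the multigraph $M_1\cup M_2$ decomposes into $M_1$-$M_2$-alternating cycles; an edge $\{u_i,v_j\}\in M_1\cap M_2$ is called a $2$-cycle $(i,j)$, and an alternating cycle with four edges $\{u_i,v_j\},\{u_{i'},v_{j'}\}\in M_1$, $\{u_i,v_{j'}\},\{u_{i'},v_j\}\in M_2$ is a $4$-cycle $(i,j,i',j')$; it is aligned if $i<i'$ and $j<j'$. An aligned $4$-cycle $(i_1,j_1,i_1',j_1')$ is nested inside an aligned $4$-cycle $(i_2,j_2,i_2',j_2')$ if $i_2<i_1<i_1'<i_2'$ and $j_2<j_1<j_1'<j_2'$;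 a $2$-cycle $(i_1,j_1)$ is nested inside $(i_2,j_2,i_2',j_2')$ if $i_2<i_1<i_2'$ and $j_2<j_1<j_2'$. *)

theory Defs
  imports Complex_Main
begin

text \<open>Vertices u_i, v_j of K_{n,n} are indexed by i, j in {1..n}; an edge {u_i,v_j}
  is represented by the pair (i,j). A matching is a set of such pairs.\<close>

definition perfect_matching :: "nat \<Rightarrow> (nat \<times> nat) set \<Rightarrow> bool" where
  "perfect_matching n M \<longleftrightarrow> M \<subseteq> {1..n} \<times> {1..n}
     \<and> (\<forall>i\<in>{1..n}. \<exists>!j. (i, j) \<in> M)
     \<and> (\<forall>j\<in>{1..n}. \<exists>!i. (i, j) \<in> M)"

definition monge :: "nat \<Rightarrow> (nat \<Rightarrow> nat \<Rightarrow> real) \<Rightarrow> bool" where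
  "monge n A \<longleftrightarrow> (\<forall>i j k l. 1 \<le> i \<and> i < k \<and> k \<le> n \<and> 1 \<le> j \<and> j < l \<and> l \<le> n \<longrightarrow>
       A i j + A k l \<le> A i l + A k j)"

definition anti_monge :: "nat \<Rightarrow> (nat \<Rightarrow> nat \<Rightarrow> real) \<Rightarrow> bool" where
  "anti_monge n B \<longleftrightarrow> (\<forall>i j k l. 1 \<le> i \<and> i < k \<and> k \<le> n \<and> 1 \<le> j \<and> j < l \<and> l \<le> n \<longrightarrow>
       B i j + B k l \<ge> B i l + B k j)"

definition mcost :: "(nat \<Rightarrow> nat \<Rightarrow> real) \<Rightarrow> (nat \<times> nat) set \<Rightarrow> real" where
  "mcost c M = (\<Sum>(i, j)\<in>M. c i j)"

definition recov_feasible :: "nat \<Rightarrow> nat \<Rightarrow> (nat \<times> nat) set \<Rightarrow> (nat \<times> nat) set \<Rightarrow> bool" where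
  "recov_feasible n k M1 M2 \<longleftrightarrow> perfect_matching n M1 \<and> perfect_matching n M2
     \<and> card (M1 \<inter> M2) \<ge> k"

definition recov_optimal :: "nat \<Rightarrow> nat \<Rightarrow> (nat \<Rightarrow> nat \<Rightarrow> real) \<Rightarrow> (nat \<Rightarrow> nat \<Rightarrow> real)
     \<Rightarrow> (nat \<times> nat) set \<Rightarrow> (nat \<times> nat) set \<Rightarrow> bool" where
  "recov_optimal n k c1 c2 M1 M2 \<longleftrightarrow> recov_feasible n k M1 M2 \<and>
     (\<forall>N1 N2. recov_feasible n k N1 N2 \<longrightarrow> mcost c1 M1 + mcost c2 M2 \<le> mcost c1 N1 + mcost c2 N2)"

definition two_cycle :: "(nat \<times> nat) set \<Rightarrow> (nat \<times> nat) set \<Rightarrow> nat \<Rightarrow> nat \<Rightarrow> bool" where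
  "two_cycle M1 M2 i j \<longleftrightarrow> (i, j) \<in> M1 \<and> (i, j) \<in> M2"

definition four_cycle :: "(nat \<times> nat) set \<Rightarrow> (nat \<times> nat) set \<Rightarrow> nat \<Rightarrow> nat \<Rightarrow> nat \<Rightarrow> nat \<Rightarrow> bool" where
  "four_cycle M1 M2 i j i' j' \<longleftrightarrow> i \<noteq> i' \<and> j \<noteq> j' \<and>
     (i, j) \<in> M1 \<and> (i', j') \<in> M1 \<and> (i, j') \<in> M2 \<and> (i', j) \<in> M2"

definition aligned :: "nat \<Rightarrow> nat \<Rightarrow> nat \<Rightarrow> nat \<Rightarrow> bool" where
  "aligned i j i' j' \<longleftrightarrow> i < i' \<and> j < j'"

definition nested4 :: "nat \<times> nat \<times> nat \<times> nat \<Rightarrow> nat \<times> nat \<times> nat \<times> nat \<Rightarrow> bool" where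
  "nested4 C1 C2 \<longleftrightarrow> (case C1 of (i1, j1, i1', j1') \<Rightarrow> case C2 of (i2, j2, i2', j2') \<Rightarrow>
      i2 < i1 \<and> i1 < i1' \<and> i1' < i2' \<and> j2 < j1 \<and> j1 < j1' \<and> j1' < j2')"

definition nested2 :: "nat \<times> nat \<Rightarrow> nat \<times> nat \<times> nat \<times> nat \<Rightarrow> bool" where
  "nested2 C1 C2 \<longleftrightarrow> (case C1 of (i1, j1) \<Rightarrow> case C2 of (i2, j2, i2', j2') \<Rightarrow>
      i2 < i1 \<and> i1 < i2' \<and> j2 < j1 \<and> j1 < j2')"

end

theory Submission
  imports Defs "HOL-Combinatorics.Permutations"
begin

text \<open>Perfect matchings of \<open>K\<^sub>n\<^sub>,\<^sub>n\<close> are graphs of permutations of \<open>{1..n}\<close>. Take an optimal pair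
  \<open>(s\<^sub>1, s\<^sub>2)\<close> which, among all optimal pairs, minimises \<open>W s\<^sub>2 - W s\<^sub>1\<close> for the potential
  \<open>W s = \<Sum>i. i * s i\<close>. Swapping the values of a permutation at an inversion \<open>p < q\<close>, \<open>s q < s p\<close>,
  does not increase a Monge cost and strictly increases \<open>W\<close>; dually, swapping at a non-inversion
  does not increase an anti-Monge cost and strictly decreases \<open>W\<close>. Swaps at two indices outside
  \<open>M\<^sub>1 \<inter> M\<^sub>2\<close> keep every common edge, so by extremality \<open>s\<^sub>1\<close> is increasing and \<open>s\<^sub>2\<close>
  decreasing on those indices, which makes the 4-cycles aligned and pairwise nested. For a 2-cycle
  at \<open>i\<close> and a 4-cycle at \<open>a < a'\<close>, sorting \<open>s\<^sub>1\<close> upwards and \<open>s\<^sub>2\<close> downwards on \<open>{i, a, a'}\<close>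
  makes them agree at the middle index, so no common edge is lost; hence both were sorted already,
  which forces \<open>a < i < a'\<close>.\<close>

section \<open>Perfect matchings as permutations\<close>

definition perm_matching :: "nat \<Rightarrow> (nat \<Rightarrow> nat) \<Rightarrow> (nat \<times> nat) set" where
  "perm_matching n s = (\<lambda>i. (i, s i)) ` {1..n}"

lemma mem_perm_matching [simp]: "(i, j) \<in> perm_matching n s \<longleftrightarrow> i \<in> {1..n} \<and> s i = j"
  unfolding perm_matching_def by auto

lemma perfect_matching_perm_matching:
  assumes "s permutes {1..n}"
  shows "perfect_matching n (perm_matching n s)"
  unfolding perfect_matching_def
proof (intro conjI ballI)
  show "perm_matching n s \<subseteq> {1..n} \<times> {1..n}"
  proof
    fix e assume "e \<in> perm_matching n s"
    then obtain i where "i \<in> {1..n}" "e = (i, s i)" unfolding perm_matching_def by blast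
    then show "e \<in> {1..n} \<times> {1..n}" using permutes_in_image[OF assms] by blast
  qed
  show "\<exists>!j. (i, j) \<in> perm_matching n s" if "i \<in> {1..n}" for i
    using that by (intro ex1I[of _ "s i"]) simp_all
  show "\<exists>!i. (i, j) \<in> perm_matching n s" if "j \<in> {1..n}" for j
  proof (rule ex1I[of _ "inv s j"])
    have "inv s j \<in> {1..n}"
      using that permutes_in_image[OF permutes_inv[OF assms]] by blast
    then show "(inv s j, j) \<in> perm_matching n s"
      using permutes_inverses(1)[OF assms] by simp
    show "i = inv s j" if "(i, j) \<in> perm_matching n s" for i
      using that permutes_inverses(2)[OF assms] by auto
  qed
qed

lemma perfect_matching_imp_perm_matching:
  assumes "perfect_matching n M"
  obtains s where "s permutes {1..n}" and "M = perm_matching n s"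
proof -
  let ?S = "{1..n}"
  have sub: "M \<subseteq> ?S \<times> ?S" and row: "\<forall>i\<in>?S. \<exists>!j. (i, j) \<in> M"
    and col: "\<forall>j\<in>?S. \<exists>!i. (i, j) \<in> M"
    using assms unfolding perfect_matching_def by auto
  define s where "s i = (if i \<in> ?S then THE j. (i, j) \<in> M else i)" for i
  have on_edge: "(i, s i) \<in> M" if "i \<in> ?S" for i
    using theI'[OF bspec[OF row that]] that by (simp add: s_def)
  have edge_iff: "(i, j) \<in> M \<longleftrightarrow> i \<in> ?S \<and> s i = j" for i j
  proof
    assume "(i, j) \<in> M"
    moreover from this have "i \<in> ?S" using sub by blast
    ultimately show "i \<in> ?S \<and> s i = j"
      using on_edge bspec[OF row] by blast
  qed (use on_edge in blast)
  have "bij_betw s ?S ?S"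
    unfolding bij_betw_def inj_on_def
  proof (intro conjI ballI impI equalityI subsetI)
    fix x y assume "x \<in> ?S" "y \<in> ?S" "s x = s y"
    then have "(x, s x) \<in> M" "(y, s x) \<in> M" "s x \<in> ?S"
      using on_edge sub by force+
    then show "x = y" using col by blast
  next
    fix j assume "j \<in> s ` ?S"
    then show "j \<in> ?S" using on_edge sub by blast
  next
    fix j assume "j \<in> ?S"
    then obtain i where "(i, j) \<in> M" using col by blast
    then have "i \<in> ?S" "j = s i" using edge_iff by auto
    then show "j \<in> s ` ?S" by blast
  qed
  then have "s permutes ?S"
    by (rule bij_imp_permutes) (auto simp: s_def)
  moreover have "M = perm_matching n s"
    by (auto simp: set_eq_iff edge_iff)
  ultimately show thesis by (rule that)
qed

definition agreement :: "nat \<Rightarrow> (nat \<Rightarrow> nat) \<Rightarrow> (nat \<Rightarrow> nat) \<Rightarrow> nat set" where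
  "agreement n s1 s2 = {i \<in> {1..n}. s1 i = s2 i}"

lemma finite_agreement: "finite (agreement n s1 s2)"
  unfolding agreement_def by simp

lemma card_agreement_le_if_eq_outside:
  assumes "\<forall>x. x \<notin> R \<longrightarrow> t1 x = s1 x" "\<forall>x. x \<notin> R \<longrightarrow> t2 x = s2 x"
    and "agreement n s1 s2 \<inter> R \<subseteq> {i}" "m \<in> R" "m \<in> agreement n t1 t2"
  shows "card (agreement n s1 s2) \<le> card (agreement n t1 t2)"
proof -
  let ?X = "agreement n s1 s2 - R"
  have "finite ?X" "m \<notin> ?X"
    using assms(4) finite_agreement by auto
  have "card (agreement n s1 s2) \<le> card (insert i ?X)"
    using assms(3) \<open>finite ?X\<close> by (intro card_mono) auto
  also have "\<dots> \<le> Suc (card ?X)"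
    using \<open>finite ?X\<close> by (simp add: card_insert_if)
  also have "\<dots> = card (insert m ?X)"
    using \<open>finite ?X\<close> \<open>m \<notin> ?X\<close> by simp
  also have "\<dots> \<le> card (agreement n t1 t2)"
    using assms(1,2,5) finite_agreement by (intro card_mono) (auto simp: agreement_def)
  finally show ?thesis .
qed

lemma card_perm_matching_Int:
  "card (perm_matching n s1 \<inter> perm_matching n s2) = card (agreement n s1 s2)"
proof -
  have "perm_matching n s1 \<inter> perm_matching n s2 = (\<lambda>i. (i, s1 i)) ` agreement n s1 s2"
    by (auto simp: agreement_def)
  then show ?thesis by (simp add: card_image inj_on_def)
qed

lemma recov_feasible_perm_matching:
  assumes "s1 permutes {1..n}" "s2 permutes {1..n}" "k \<le> card (agreement n s1 s2)"
  shows "recov_feasible n k (perm_matching n s1) (perm_matching n s2)"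
  unfolding recov_feasible_def card_perm_matching_Int
  using assms perfect_matching_perm_matching by blast

lemma recov_feasibleE:
  assumes "recov_feasible n k M1 M2"
  obtains s1 s2 where "s1 permutes {1..n}" "s2 permutes {1..n}" "k \<le> card (agreement n s1 s2)"
    and "M1 = perm_matching n s1" "M2 = perm_matching n s2"
proof -
  obtain s1 s2 where "s1 permutes {1..n}" "M1 = perm_matching n s1"
    and "s2 permutes {1..n}" "M2 = perm_matching n s2"
    using assms perfect_matching_imp_perm_matching unfolding recov_feasible_def by metis
  with assms show thesis
    using that card_perm_matching_Int unfolding recov_feasible_def by simp
qed

lemma four_cycle_perm_matching:
  "four_cycle (perm_matching n s1) (perm_matching n s2) i j i' j' \<longleftrightarrow>
     i \<in> {1..n} \<and> i' \<in> {1..n} \<and> i \<noteq> i' \<and> j \<noteq> j' \<and> s1 i = j \<and> s1 i' = j' \<and> s2 i = j' \<and> s2 i' = j"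
  unfolding four_cycle_def by auto

lemma two_cycle_perm_matching:
  "two_cycle (perm_matching n s1) (perm_matching n s2) i j \<longleftrightarrow> i \<in> {1..n} \<and> s1 i = j \<and> s2 i = j"
  unfolding two_cycle_def by auto

section \<open>Costs under transpositions\<close>

definition perm_cost :: "nat \<Rightarrow> (nat \<Rightarrow> nat \<Rightarrow> real) \<Rightarrow> (nat \<Rightarrow> nat) \<Rightarrow> real" where
  "perm_cost n c s = (\<Sum>i\<in>{1..n}. c i (s i))"

lemma mcost_perm_matching: "mcost c (perm_matching n s) = perm_cost n c s"
  unfolding mcost_def perm_matching_def perm_cost_def
  by (subst sum.reindex) (auto simp: inj_on_def)

lemma perm_cost_swap:
  assumes "p \<in> {1..n}" "q \<in> {1..n}" "p \<noteq> q"
  shows "perm_cost n c (s \<circ> transpose p q) + c p (s p) + c q (s q)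
    = perm_cost n c s + c p (s q) + c q (s p)"
proof -
  let ?R = "{1..n} - {p} - {q}"
  have split: "(\<Sum>i\<in>{1..n}. f i) = f p + f q + (\<Sum>i\<in>?R. f i)" for f :: "nat \<Rightarrow> real"
  proof -
    have "(\<Sum>i\<in>{1..n}. f i) = f p + (\<Sum>i\<in>{1..n} - {p}. f i)"
      using assms(1) by (simp add: sum.remove)
    also have "(\<Sum>i\<in>{1..n} - {p}. f i) = f q + (\<Sum>i\<in>?R. f i)"
      using assms by (intro sum.remove) auto
    finally show ?thesis by simp
  qed
  have "(\<Sum>i\<in>?R. c i ((s \<circ> transpose p q) i)) = (\<Sum>i\<in>?R. c i (s i))"
    by (rule sum.cong) auto
  then show ?thesis
    unfolding perm_cost_def split[of "\<lambda>i. c i ((s \<circ> transpose p q) i)"] split[of "\<lambda>i. c i (s i)"]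
    by simp
qed

lemma monge_perm_cost_swap_le:
  assumes "monge n A" "s permutes {1..n}" "p \<in> {1..n}" "q \<in> {1..n}" "p < q" "s q < s p"
  shows "perm_cost n A (s \<circ> transpose p q) \<le> perm_cost n A s"
proof -
  have "s p \<in> {1..n}" "s q \<in> {1..n}"
    using assms(2-4) by (metis permutes_in_image[THEN iffD2])+
  then have "A p (s q) + A q (s p) \<le> A p (s p) + A q (s q)"
    using assms(1,3-6) unfolding monge_def by auto
  then show ?thesis
    using perm_cost_swap[of p n q A s] assms(3-5) by simp
qed

lemma anti_monge_perm_cost_swap_le:
  assumes "anti_monge n B" "s permutes {1..n}" "p \<in> {1..n}" "q \<in> {1..n}" "p < q" "s p < s q"
  shows "perm_cost n B (s \<circ> transpose p q) \<le> perm_cost n B s"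
proof -
  have "s p \<in> {1..n}" "s q \<in> {1..n}"
    using assms(2-4) by (metis permutes_in_image[THEN iffD2])+
  then have "B p (s q) + B q (s p) \<le> B p (s p) + B q (s q)"
    using assms(1,3-6) unfolding anti_monge_def by auto
  then show ?thesis
    using perm_cost_swap[of p n q B s] assms(3-5) by simp
qed

definition perm_weight :: "nat \<Rightarrow> (nat \<Rightarrow> nat) \<Rightarrow> real" where
  "perm_weight n s = perm_cost n (\<lambda>i j. real i * real j) s"

lemma perm_weight_swap:
  assumes "p \<in> {1..n}" "q \<in> {1..n}" "p < q"
  shows "perm_weight n (s \<circ> transpose p q)
    = perm_weight n s + (real q - real p) * (real (s p) - real (s q))"
  using perm_cost_swap[of p n q "\<lambda>i j. real i * real j" s] assms
  unfolding perm_weight_def by (simp add: algebra_simps)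

lemma perm_weight_less_swap:
  assumes "p \<in> {1..n}" "q \<in> {1..n}" "p < q" "s q < s p"
  shows "perm_weight n s < perm_weight n (s \<circ> transpose p q)"
  using perm_weight_swap[OF assms(1-3), of s] assms(3,4) by simp

lemma perm_weight_swap_less:
  assumes "p \<in> {1..n}" "q \<in> {1..n}" "p < q" "s p < s q"
  shows "perm_weight n (s \<circ> transpose p q) < perm_weight n s"
  using perm_weight_swap[OF assms(1-3), of s] assms(3,4) by (simp add: mult_pos_neg)

lemma permutes_image_eq_if_eq_outside:
  assumes "s permutes S" "t permutes S" "\<forall>x. x \<notin> R \<longrightarrow> t x = s x"
  shows "t ` R = s ` R"
proof -
  have "t ` (- R) = s ` (- R)"
    using assms(3) by auto
  then have "- (t ` R) = - (s ` R)"
    using permutes_bij[OF assms(1)] permutes_bij[OF assms(2)] by (simp add: bij_image_Compl_eq)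
  then show ?thesis by simp
qed

section \<open>Sorting by improving swaps\<close>

locale improving_swaps =
  fixes S :: "'a::linorder set" and key :: "'a \<Rightarrow> 'b::linorder" and f g :: "('a \<Rightarrow> 'a) \<Rightarrow> 'c::order"
  assumes inj_key: "inj key"
    and swap: "\<And>t p q. t permutes S \<Longrightarrow> p \<in> S \<Longrightarrow> q \<in> S \<Longrightarrow> p < q \<Longrightarrow> key (t q) < key (t p) \<Longrightarrow>
      f (t \<circ> transpose p q) \<le> f t \<and> g t < g (t \<circ> transpose p q)"
begin

lemma swap_least_to_front:
  assumes "finite R" "insert r R \<subseteq> S" "\<forall>a\<in>R. r < a" "s permutes S"
  obtains s0 where "s0 permutes S" "\<forall>x. x \<notin> insert r R \<longrightarrow> s0 x = s x"
    "\<forall>x\<in>insert r R. key (s0 r) \<le> key (s x)" "f s0 \<le> f s" "s0 = s \<or> g s < g s0"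
proof -
  let ?R = "insert r R"
  define r0 where "r0 = arg_min_on (\<lambda>x. key (s x)) ?R"
  have "finite ?R" "?R \<noteq> {}"
    using assms(1) by auto
  then have r0: "r0 \<in> ?R"
    unfolding r0_def by (rule arg_min_if_finite(1))
  have r0_least: "\<forall>x\<in>?R. key (s r0) \<le> key (s x)"
    using arg_min_least[OF \<open>finite ?R\<close> \<open>?R \<noteq> {}\<close>, of _ "\<lambda>x. key (s x)"] unfolding r0_def by simp
  define s0 where "s0 = s \<circ> transpose r r0"
  have "f s0 \<le> f s \<and> (s0 = s \<or> g s < g s0)"
  proof (cases "r0 = r")
    case True
    then show ?thesis by (simp add: s0_def)
  next
    case False
    then have "r < r0"
      using r0 assms(3) by auto
    moreover have "key (s r0) < key (s r)"
      using r0_least False permutes_inj[OF assms(4)] inj_key by (simp add: inj_eq order_le_neq_trans)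
    ultimately show ?thesis
      using swap[OF assms(4), of r r0] assms(2) r0 unfolding s0_def by auto
  qed
  moreover have "s0 permutes S"
    unfolding s0_def using assms(2) r0 by (intro permutes_compose[OF permutes_swap_id assms(4)]) auto
  moreover have "\<forall>x. x \<notin> ?R \<longrightarrow> s0 x = s x"
    using r0 by (auto simp: s0_def transpose_def)
  moreover have "\<forall>x\<in>?R. key (s0 r) \<le> key (s x)"
    using r0_least by (simp add: s0_def)
  ultimately show thesis
    using that by blast
qed

lemma sorted_on_insert_least:
  assumes "s permutes S" "t permutes S" "\<forall>x. x \<notin> insert r R \<longrightarrow> t x = s x" "\<forall>a\<in>R. r < a"
    and "\<forall>p\<in>R. \<forall>q\<in>R. p < q \<longrightarrow> key (t p) < key (t q)"
    and "\<forall>x\<in>insert r R. key (t r) \<le> key (s x)"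
  shows "\<forall>p\<in>insert r R. \<forall>q\<in>insert r R. p < q \<longrightarrow> key (t p) < key (t q)"
proof (intro ballI impI)
  fix p q assume pq: "p \<in> insert r R" "q \<in> insert r R" "p < q"
  show "key (t p) < key (t q)"
  proof (cases "p = r")
    case True
    obtain x where "x \<in> insert r R" "t q = s x"
      using pq(2) permutes_image_eq_if_eq_outside[OF assms(1-3)] by (metis imageE imageI)
    then have "key (t p) \<le> key (t q)"
      using True assms(6) by auto
    moreover have "t p \<noteq> t q"
      using permutes_inj[OF assms(2)] pq(3) by (metis injD less_irrefl)
    ultimately show ?thesis
      using inj_key by (simp add: inj_eq order_le_neq_trans)
  next
    case False
    then show ?thesis
      using pq assms(4,5) by force
  qed
qed

lemma sort_on:
  assumes "finite R" "R \<subseteq> S" "s permutes S"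
  shows "\<exists>t. t permutes S \<and> (\<forall>x. x \<notin> R \<longrightarrow> t x = s x)
    \<and> (\<forall>p\<in>R. \<forall>q\<in>R. p < q \<longrightarrow> key (t p) < key (t q)) \<and> f t \<le> f s \<and> (t = s \<or> g s < g t)"
  using assms
proof (induction R arbitrary: s rule: finite_linorder_min_induct)
  case empty
  then show ?case by blast
next
  case (insert r R)
  obtain s0 where s0: "s0 permutes S" "\<forall>x. x \<notin> insert r R \<longrightarrow> s0 x = s x"
      "\<forall>x\<in>insert r R. key (s0 r) \<le> key (s x)" "f s0 \<le> f s" "s0 = s \<or> g s < g s0"
    using swap_least_to_front[OF insert.hyps(1) insert.prems(1) insert.hyps(2) insert.prems(2)] .
  obtain t where t: "t permutes S" "\<forall>x. x \<notin> R \<longrightarrow> t x = s0 x"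
      "\<forall>p\<in>R. \<forall>q\<in>R. p < q \<longrightarrow> key (t p) < key (t q)" "f t \<le> f s0" "t = s0 \<or> g s0 < g t"
    using insert.IH[OF _ s0(1)] insert.prems(1) by blast
  have "t r = s0 r"
    using t(2) insert.hyps(2) by blast
  moreover have t_outside: "\<forall>x. x \<notin> insert r R \<longrightarrow> t x = s x"
    using t(2) s0(2) by simp
  ultimately have "\<forall>p\<in>insert r R. \<forall>q\<in>insert r R. p < q \<longrightarrow> key (t p) < key (t q)"
    using sorted_on_insert_least[OF insert.prems(2) t(1) _ insert.hyps(2) t(3)] s0(3) by simp
  moreover have "f t \<le> f s" "t = s \<or> g s < g t"
    using t(4,5) s0(4,5) by (auto intro: order_trans less_trans)
  ultimately show ?case
    using t(1) t_outside by blast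
qed

end

lemma monge_sort_on:
  assumes "monge n A" "R \<subseteq> {1..n}" "s permutes {1..n}"
  obtains t where "t permutes {1..n}" "\<forall>x. x \<notin> R \<longrightarrow> t x = s x"
    "\<forall>p\<in>R. \<forall>q\<in>R. p < q \<longrightarrow> t p < t q" "perm_cost n A t \<le> perm_cost n A s"
    "t = s \<or> perm_weight n s < perm_weight n t"
proof -
  interpret improving_swaps "{1..n}" "\<lambda>x::nat. x" "perm_cost n A" "perm_weight n"
  proof
    show "inj (\<lambda>x::nat. x)"
      by (simp add: inj_on_def)
    show "perm_cost n A (t \<circ> transpose p q) \<le> perm_cost n A t
      \<and> perm_weight n t < perm_weight n (t \<circ> transpose p q)"
      if "t permutes {1..n}" "p \<in> {1..n}" "q \<in> {1..n}" "p < q" "t q < t p" for t p q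
      using monge_perm_cost_swap_le[OF assms(1) that] perm_weight_less_swap[OF that(2-5)] by simp
  qed
  show thesis
    using sort_on[OF finite_subset[OF assms(2)] assms(2,3)] that by auto
qed

lemma anti_monge_sort_on:
  assumes "anti_monge n B" "R \<subseteq> {1..n}" "s permutes {1..n}"
  obtains t where "t permutes {1..n}" "\<forall>x. x \<notin> R \<longrightarrow> t x = s x"
    "\<forall>p\<in>R. \<forall>q\<in>R. p < q \<longrightarrow> t q < t p" "perm_cost n B t \<le> perm_cost n B s"
    "t = s \<or> perm_weight n t < perm_weight n s"
proof -
  interpret improving_swaps "{1..n}" "\<lambda>x::nat. - int x" "perm_cost n B" "\<lambda>t. - perm_weight n t"
  proof
    show "inj (\<lambda>x::nat. - int x)"
      by (simp add: inj_on_def)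
    show "perm_cost n B (t \<circ> transpose p q) \<le> perm_cost n B t
      \<and> - perm_weight n t < - perm_weight n (t \<circ> transpose p q)"
      if "t permutes {1..n}" "p \<in> {1..n}" "q \<in> {1..n}" "p < q" "- int (t q) < - int (t p)" for t p q
    proof -
      have "t p < t q" using that(5) by simp
      then show ?thesis
        using anti_monge_perm_cost_swap_le[OF assms(1) that(1-4)] perm_weight_swap_less[OF that(2-4)]
        by simp
    qed
  qed
  show thesis
    using sort_on[OF finite_subset[OF assms(2)] assms(2,3)] that by auto
qed

lemma card_le_3_middle_unique:
  fixes T :: "'a::linorder set"
  assumes "finite T" "card T \<le> 3" "{l1, u, h1, l2, v, h2} \<subseteq> T"
    and "l1 < u" "u < h1" "l2 < v" "v < h2"
  shows "u = v"
proof (rule ccontr)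
  assume "u \<noteq> v"
  then obtain l x y h where sub: "{l, x, y, h} \<subseteq> T" and "l < x" "x < y" "y < h"
    using assms(3-7) by (metis insert_subset linorder_neqE)
  then have "l < y" "l < h" "x < h"
    by (meson less_trans)+
  then have "card {l, x, y, h} = 4"
    using \<open>l < x\<close> \<open>x < y\<close> \<open>y < h\<close> by (simp add: less_imp_neq)
  moreover have "card {l, x, y, h} \<le> card T"
    using assms(1) sub by (rule card_mono)
  ultimately show False
    using assms(2) by linarith
qed

section \<open>Lexicographically optimal solutions\<close>

locale lex_optimal_pair =
  fixes n k :: nat and A B :: "nat \<Rightarrow> nat \<Rightarrow> real" and s1 s2 :: "nat \<Rightarrow> nat"
  assumes monge: "monge n A" and anti_monge: "anti_monge n B"
    and permutes1: "s1 permutes {1..n}" and permutes2: "s2 permutes {1..n}"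
    and card_agreement: "k \<le> card (agreement n s1 s2)"
    and cost_minimal: "\<And>t1 t2. t1 permutes {1..n} \<Longrightarrow> t2 permutes {1..n} \<Longrightarrow>
      k \<le> card (agreement n t1 t2) \<Longrightarrow>
      perm_cost n A s1 + perm_cost n B s2 \<le> perm_cost n A t1 + perm_cost n B t2"
    and weight_minimal: "\<And>t1 t2. t1 permutes {1..n} \<Longrightarrow> t2 permutes {1..n} \<Longrightarrow>
      k \<le> card (agreement n t1 t2) \<Longrightarrow>
      perm_cost n A t1 + perm_cost n B t2 = perm_cost n A s1 + perm_cost n B s2 \<Longrightarrow>
      perm_weight n s2 - perm_weight n s1 \<le> perm_weight n t2 - perm_weight n t1"
begin

lemma recov_optimal: "recov_optimal n k A B (perm_matching n s1) (perm_matching n s2)"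
  unfolding recov_optimal_def
proof (intro conjI allI impI)
  show "recov_feasible n k (perm_matching n s1) (perm_matching n s2)"
    using permutes1 permutes2 card_agreement by (rule recov_feasible_perm_matching)
  fix M1 M2 assume "recov_feasible n k M1 M2"
  then obtain t1 t2 where "t1 permutes {1..n}" "t2 permutes {1..n}" "k \<le> card (agreement n t1 t2)"
    and "M1 = perm_matching n t1" "M2 = perm_matching n t2"
    by (rule recov_feasibleE)
  then show "mcost A (perm_matching n s1) + mcost B (perm_matching n s2) \<le> mcost A M1 + mcost B M2"
    using cost_minimal by (simp add: mcost_perm_matching)
qed

lemma no_improvement:
  assumes "t1 permutes {1..n}" "t2 permutes {1..n}"
    and "card (agreement n s1 s2) \<le> card (agreement n t1 t2)"
    and "perm_cost n A t1 \<le> perm_cost n A s1" "perm_cost n B t2 \<le> perm_cost n B s2"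
    and "t1 = s1 \<or> perm_weight n s1 < perm_weight n t1"
    and "t2 = s2 \<or> perm_weight n t2 < perm_weight n s2"
  shows "t1 = s1 \<and> t2 = s2"
proof (rule ccontr)
  assume "\<not> (t1 = s1 \<and> t2 = s2)"
  then have "perm_weight n t2 - perm_weight n t1 < perm_weight n s2 - perm_weight n s1"
    using assms(6,7) by auto
  moreover have feasible: "k \<le> card (agreement n t1 t2)"
    using card_agreement assms(3) by linarith
  then have "perm_cost n A t1 + perm_cost n B t2 = perm_cost n A s1 + perm_cost n B s2"
    using cost_minimal[OF assms(1,2)] assms(4,5) by fastforce
  ultimately show False
    using weight_minimal[OF assms(1,2) feasible] by linarith
qed

lemma s1_less_iff:
  assumes "p \<in> {1..n}" "q \<in> {1..n}" "s1 p \<noteq> s2 p" "s1 q \<noteq> s2 q"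
  shows "s1 p < s1 q \<longleftrightarrow> p < q"
proof -
  have mono: "s1 p < s1 q"
    if "p \<in> {1..n}" "q \<in> {1..n}" "s1 p \<noteq> s2 p" "s1 q \<noteq> s2 q" "p < q" for p q
  proof (rule ccontr)
    assume "\<not> s1 p < s1 q"
    moreover have "s1 p \<noteq> s1 q"
      using permutes_inj[OF permutes1] that(5) by (metis injD less_irrefl)
    ultimately have inversion: "s1 q < s1 p" by simp
    let ?t = "s1 \<circ> transpose p q"
    have "?t permutes {1..n}"
      using that(1,2) by (intro permutes_compose[OF permutes_swap_id permutes1])
    moreover have "agreement n s1 s2 \<subseteq> agreement n ?t s2"
      using that(3,4) by (auto simp: agreement_def transpose_def)
    then have "card (agreement n s1 s2) \<le> card (agreement n ?t s2)"
      by (simp add: card_mono finite_agreement)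
    ultimately have "?t = s1"
      using no_improvement[OF _ permutes2] monge_perm_cost_swap_le[OF monge permutes1 that(1,2,5) inversion]
        perm_weight_less_swap[OF that(1,2,5) inversion] by blast
    then have "s1 q = s1 p"
      by (metis comp_apply transpose_apply_first)
    then show False
      using inversion by simp
  qed
  show ?thesis
    using assms mono[of p q] mono[of q p] by (cases p q rule: linorder_cases) auto
qed

lemma s2_less_iff:
  assumes "p \<in> {1..n}" "q \<in> {1..n}" "s1 p \<noteq> s2 p" "s1 q \<noteq> s2 q"
  shows "s2 p < s2 q \<longleftrightarrow> q < p"
proof -
  have antimono: "s2 q < s2 p"
    if "p \<in> {1..n}" "q \<in> {1..n}" "s1 p \<noteq> s2 p" "s1 q \<noteq> s2 q" "p < q" for p q
  proof (rule ccontr)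
    assume "\<not> s2 q < s2 p"
    moreover have "s2 p \<noteq> s2 q"
      using permutes_inj[OF permutes2] that(5) by (metis injD less_irrefl)
    ultimately have order: "s2 p < s2 q" by simp
    let ?t = "s2 \<circ> transpose p q"
    have "?t permutes {1..n}"
      using that(1,2) by (intro permutes_compose[OF permutes_swap_id permutes2])
    moreover have "agreement n s1 s2 \<subseteq> agreement n s1 ?t"
      using that(3,4) by (auto simp: agreement_def transpose_def)
    then have "card (agreement n s1 s2) \<le> card (agreement n s1 ?t)"
      by (simp add: card_mono finite_agreement)
    ultimately have "?t = s2"
      using no_improvement[OF permutes1] anti_monge_perm_cost_swap_le[OF anti_monge permutes2 that(1,2,5) order]
        perm_weight_swap_less[OF that(1,2,5) order] by blast
    then have "s2 q = s2 p"
      by (metis comp_apply transpose_apply_first)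
    then show False
      using order by simp
  qed
  show ?thesis
    using assms antimono[of p q] antimono[of q p] by (cases p q rule: linorder_cases) auto
qed

lemma four_cycle_aligned:
  assumes "four_cycle (perm_matching n s1) (perm_matching n s2) i j i' j'" "i < i'"
  shows "aligned i j i' j'"
proof -
  have "i \<in> {1..n}" "i' \<in> {1..n}" "s1 i = j" "s1 i' = j'" "s2 i = j'" "s2 i' = j" "j \<noteq> j'"
    using assms(1) unfolding four_cycle_perm_matching by auto
  then show ?thesis
    using s1_less_iff[of i i'] assms(2) unfolding aligned_def by auto
qed

lemma four_cycles_nested_if_less:
  assumes "four_cycle (perm_matching n s1) (perm_matching n s2) i1 j1 i1' j1'" "i1 < i1'"
    and "four_cycle (perm_matching n s1) (perm_matching n s2) i2 j2 i2' j2'" "i2 < i2'"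
    and "i1 < i2"
  shows "nested4 (i2, j2, i2', j2') (i1, j1, i1', j1')"
proof -
  have c1: "i1 \<in> {1..n}" "i1' \<in> {1..n}" "s1 i1 = j1" "s1 i1' = j1'" "s2 i1 = j1'" "s2 i1' = j1" "j1 \<noteq> j1'"
    using assms(1) unfolding four_cycle_perm_matching by auto
  have c2: "i2 \<in> {1..n}" "i2' \<in> {1..n}" "s1 i2 = j2" "s1 i2' = j2'" "s2 i2 = j2'" "s2 i2' = j2" "j2 \<noteq> j2'"
    using assms(3) unfolding four_cycle_perm_matching by auto
  have moved: "s1 i1 \<noteq> s2 i1" "s1 i1' \<noteq> s2 i1'" "s1 i2 \<noteq> s2 i2" "s1 i2' \<noteq> s2 i2'"
    using c1 c2 by auto
  have "j1 < j2"
    using s1_less_iff[of i1 i2] c1 c2 moved assms(5) by simp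
  moreover have "j2' < j1'"
    using s2_less_iff[of i2 i1] c1 c2 moved assms(5) by simp
  moreover have "j2 < j2'"
    using four_cycle_aligned[OF assms(3,4)] unfolding aligned_def by simp
  moreover from calculation have "i2' < i1'"
    using s1_less_iff[of i2' i1'] c1 c2 moved by simp
  ultimately show ?thesis
    using assms(4,5) unfolding nested4_def by simp
qed

lemma four_cycles_nested:
  assumes "four_cycle (perm_matching n s1) (perm_matching n s2) i1 j1 i1' j1'" "i1 < i1'"
    and "four_cycle (perm_matching n s1) (perm_matching n s2) i2 j2 i2' j2'" "i2 < i2'"
    and "(i1, j1, i1', j1') \<noteq> (i2, j2, i2', j2')"
  shows "nested4 (i1, j1, i1', j1') (i2, j2, i2', j2') \<or> nested4 (i2, j2, i2', j2') (i1, j1, i1', j1')"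
proof (cases i1 i2 rule: linorder_cases)
  case less
  then show ?thesis
    using four_cycles_nested_if_less[OF assms(1-4)] by blast
next
  case equal
  then have "j1 = j2" "j1' = j2'" "s2 i1' = s2 i2'" "i1' \<in> {1..n}" "i2' \<in> {1..n}"
    using assms(1,3) unfolding four_cycle_perm_matching by auto
  moreover from this have "i1' = i2'"
    using permutes_inj[OF permutes2] by (meson injD)
  ultimately show ?thesis
    using equal assms(5) by simp
next
  case greater
  then show ?thesis
    using four_cycles_nested_if_less[OF assms(3,4,1,2)] by blast
qed

lemma two_cycle_sorted:
  assumes "two_cycle (perm_matching n s1) (perm_matching n s2) i j"
    and "four_cycle (perm_matching n s1) (perm_matching n s2) a b a' b'" "a < a'"
  shows "\<forall>p\<in>{i, a, a'}. \<forall>q\<in>{i, a, a'}. p < q \<longrightarrow> s1 p < s1 q \<and> s2 q < s2 p"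
proof -
  have fixed: "i \<in> {1..n}" "s1 i = j" "s2 i = j"
    using assms(1) unfolding two_cycle_perm_matching by auto
  have cycle: "a \<in> {1..n}" "a' \<in> {1..n}" "s1 a = b" "s1 a' = b'" "s2 a = b'" "s2 a' = b" "b \<noteq> b'"
    using assms(2) unfolding four_cycle_perm_matching by auto
  define R where "R = {i, a, a'}"
  have R: "R \<subseteq> {1..n}"
    using fixed cycle unfolding R_def by simp
  obtain t1 where t1: "t1 permutes {1..n}" "\<forall>x. x \<notin> R \<longrightarrow> t1 x = s1 x"
      "\<forall>p\<in>R. \<forall>q\<in>R. p < q \<longrightarrow> t1 p < t1 q" "perm_cost n A t1 \<le> perm_cost n A s1"
      "t1 = s1 \<or> perm_weight n s1 < perm_weight n t1"
    using monge_sort_on[OF monge R permutes1] by blast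
  obtain t2 where t2: "t2 permutes {1..n}" "\<forall>x. x \<notin> R \<longrightarrow> t2 x = s2 x"
      "\<forall>p\<in>R. \<forall>q\<in>R. p < q \<longrightarrow> t2 q < t2 p" "perm_cost n B t2 \<le> perm_cost n B s2"
      "t2 = s2 \<or> perm_weight n t2 < perm_weight n s2"
    using anti_monge_sort_on[OF anti_monge R permutes2] by blast
  obtain l m h where lmh: "{l, m, h} \<subseteq> R" "l < m" "m < h"
  proof -
    consider "i < a" | "a < i" "i < a'" | "a' < i"
      using fixed cycle \<open>a < a'\<close> by (metis linorder_neqE_nat)
    then show thesis
      using that \<open>a < a'\<close> unfolding R_def by cases auto
  qed
  have "t1 m = t2 m"
  proof (rule card_le_3_middle_unique)
    show "finite {j, b, b'}" "card {j, b, b'} \<le> 3"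
      by (simp_all add: card_insert_le_m1)
    have "t1 ` R = {j, b, b'}" "t2 ` R = {j, b, b'}"
      using permutes_image_eq_if_eq_outside[OF permutes1 t1(1,2)]
        permutes_image_eq_if_eq_outside[OF permutes2 t2(1,2)] fixed cycle
      unfolding R_def by auto
    then show "{t1 l, t1 m, t1 h, t2 h, t2 m, t2 l} \<subseteq> {j, b, b'}"
      using lmh(1) by blast
    show "t1 l < t1 m" "t1 m < t1 h" "t2 h < t2 m" "t2 m < t2 l"
      using lmh t1(3) t2(3) by auto
  qed
  then have "card (agreement n s1 s2) \<le> card (agreement n t1 t2)"
    using card_agreement_le_if_eq_outside[OF t1(2) t2(2), of n i m] lmh(1) R fixed cycle
    unfolding R_def agreement_def by auto
  then have "t1 = s1" "t2 = s2"
    using no_improvement[OF t1(1) t2(1) _ t1(4) t2(4) t1(5) t2(5)] by auto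
  then show ?thesis
    using t1(3) t2(3) unfolding R_def by auto
qed

lemma two_cycle_nested:
  assumes "two_cycle (perm_matching n s1) (perm_matching n s2) i j"
    and "four_cycle (perm_matching n s1) (perm_matching n s2) a b a' b'" "a < a'"
  shows "nested2 (i, j) (a, b, a', b')"
proof -
  have v: "s1 i = j" "s2 i = j" "s1 a = b" "s1 a' = b'" "s2 a = b'" "s2 a' = b"
    using assms(1,2) unfolding two_cycle_perm_matching four_cycle_perm_matching by auto
  have "b < b'"
    using four_cycle_aligned[OF assms(2,3)] unfolding aligned_def by simp
  then have "i \<noteq> a" "i \<noteq> a'"
    using v by auto
  note sorted = two_cycle_sorted[OF assms]
  have "a < i" "i < a'"
    using sorted v \<open>b < b'\<close> \<open>i \<noteq> a\<close> \<open>i \<noteq> a'\<close> \<open>a < a'\<close> by force+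
  then show ?thesis
    using sorted v unfolding nested2_def by auto
qed

end

lemma finite_lex_min:
  fixes f :: "'a \<Rightarrow> 'b::linorder" and g :: "'a \<Rightarrow> 'c::linorder"
  assumes "finite F" "F \<noteq> {}"
  obtains x where "x \<in> F" "\<forall>y\<in>F. f x \<le> f y" "\<forall>y\<in>F. f y = f x \<longrightarrow> g x \<le> g y"
proof -
  define F0 where "F0 = {y \<in> F. f y = f (arg_min_on f F)}"
  have f_least: "arg_min_on f F \<in> F" "\<forall>y\<in>F. f (arg_min_on f F) \<le> f y"
    using assms by (auto intro: arg_min_if_finite(1) arg_min_least)
  then have "finite F0" "F0 \<noteq> {}"
    using assms(1) unfolding F0_def by auto
  then have "arg_min_on g F0 \<in> F0" "\<forall>y\<in>F0. g (arg_min_on g F0) \<le> g y"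
    by (auto intro: arg_min_if_finite(1) arg_min_least)
  then show thesis
    using that[of "arg_min_on g F0"] f_least unfolding F0_def by auto
qed

lemma lex_optimal_pair_exists:
  assumes "monge n A" "anti_monge n B" "recov_feasible n k M1 M2"
  obtains s1 s2 where "lex_optimal_pair n k A B s1 s2"
proof -
  let ?S = "{1..n}"
  define F where "F = {(t1, t2). t1 permutes ?S \<and> t2 permutes ?S \<and> k \<le> card (agreement n t1 t2)}"
  define cost where "cost = (\<lambda>(t1, t2). perm_cost n A t1 + perm_cost n B t2)"
  define potential where "potential = (\<lambda>(t1, t2). perm_weight n t2 - perm_weight n t1)"
  have "finite F"
    by (rule finite_subset[of _ "{t. t permutes ?S} \<times> {t. t permutes ?S}"])
      (auto simp: F_def finite_permutations)
  moreover have "F \<noteq> {}"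
    using assms(3) by (elim recov_feasibleE) (auto simp: F_def)
  ultimately obtain x where x: "x \<in> F" "\<forall>y\<in>F. cost x \<le> cost y"
    "\<forall>y\<in>F. cost y = cost x \<longrightarrow> potential x \<le> potential y"
    by (rule finite_lex_min)
  obtain s1 s2 where "x = (s1, s2)"
    by fastforce
  have "lex_optimal_pair n k A B s1 s2"
  proof
    show "monge n A" "anti_monge n B"
      using assms(1,2) by simp_all
    show "s1 permutes ?S" "s2 permutes ?S" "k \<le> card (agreement n s1 s2)"
      using x(1) \<open>x = (s1, s2)\<close> unfolding F_def by auto
    fix t1 t2 assume "t1 permutes ?S" "t2 permutes ?S" "k \<le> card (agreement n t1 t2)"
    then have "(t1, t2) \<in> F"
      unfolding F_def by simp
    then show "perm_cost n A s1 + perm_cost n B s2 \<le> perm_cost n A t1 + perm_cost n B t2"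
      and "perm_cost n A t1 + perm_cost n B t2 = perm_cost n A s1 + perm_cost n B s2 \<Longrightarrow>
        perm_weight n s2 - perm_weight n s1 \<le> perm_weight n t2 - perm_weight n t1"
      using x(2,3) \<open>x = (s1, s2)\<close> unfolding cost_def potential_def by fastforce+
  qed
  then show thesis by (rule that)
qed

theorem lemma9:
  fixes n k :: nat and A B :: "nat \<Rightarrow> nat \<Rightarrow> real"
  assumes "monge n A" and "anti_monge n B"
    and "\<exists>M1 M2. recov_feasible n k M1 M2"
  shows "\<exists>M1 M2. recov_optimal n k A B M1 M2
     \<and> (\<forall>i j i' j'. four_cycle M1 M2 i j i' j' \<and> i < i' \<longrightarrow> aligned i j i' j')
     \<and> (\<forall>i1 j1 i1' j1' i2 j2 i2' j2'.
           four_cycle M1 M2 i1 j1 i1' j1' \<and> i1 < i1' \<and>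
           four_cycle M1 M2 i2 j2 i2' j2' \<and> i2 < i2' \<and>
           (i1, j1, i1', j1') \<noteq> (i2, j2, i2', j2') \<longrightarrow>
           nested4 (i1, j1, i1', j1') (i2, j2, i2', j2') \<or> nested4 (i2, j2, i2', j2') (i1, j1, i1', j1'))
     \<and> (\<forall>i j i2 j2 i2' j2'. two_cycle M1 M2 i j \<and> four_cycle M1 M2 i2 j2 i2' j2' \<and> i2 < i2' \<longrightarrow>
           nested2 (i, j) (i2, j2, i2', j2'))"
proof -
  obtain s1 s2 where "lex_optimal_pair n k A B s1 s2"
    using assms lex_optimal_pair_exists by metis
  then interpret lex_optimal_pair n k A B s1 s2 .
  show ?thesis
    using recov_optimal four_cycle_aligned four_cycles_nested two_cycle_nested by blast
qed

end
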